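(* Let $\mathcal{X}\subset\mathbb{R}^n$ be closed and convex, $\Xi\subset\mathbb{R}^m$ closed and convex, $\beta\in(0,1)$, $\varphi:\mathcal{X}\times\mathcal{X}\times\Xi\to\mathbb{R}$ bounded and continuous, and $\mathcal{Y}:\mathcal{X}\times\Xi\rightrightarrows\mathcal{X}$ nonempty-valued, compact-valued and continuous. Let $\xi_1,\ldots,\xi_N\in\Xi$ and $\mu_N=\frac1N\sum_{i=1}^N\xi_i$. Let $\mathcal{P}$ be a set of probability distributions on $\Xi$ such that $\mathbb{E}_Q[\boldsymbol{\xi}]=\mu_N$ for every $Q\in\mathcal{P}$ and the point mass $\delta_{\mu_N}\in\mathcal{P}$. If the MPC Bellman operator $B_{\mathrm{M}}$ is concavity preserving, then the DRO functional equation $$v_{\mathrm{R}}(x,\xi)=\inf_{y\in\mathcal{Y}(x,\xi)}\Bigl\{\varphi(x,y,\xi)+\beta\sup_{Q\in\mathcal{P}}\mathbb{E}_Q[v_{\mathrm{R}}(y,\boldsymbol{\xi})]\Bigr\}\quad\forall(x,\xi)\in\mathcal{X}\times\Xi$$ has a solution which is the same as the (unique bounded continuous) solution $v_{\mathrm{M}}$ of the MPC functional equation $$v_{\mathrm{M}}(x,\xi)=\inf_{y\in\mathcal{Y}(x,\xi)}\bigl\{\varphi(x,y,\xi)+\beta v_{\mathrm{M}}(y,\mu_N)\bigr\}\quad\forall(x,\xi)\in\mathcal{X}\times\Xi.$$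
   Context: $C_b(\mathcal{X}\times\Xi)$ denotes the Banach space of bounded continuous real-valued functions on $\mathcal{X}\times\Xi$ with the sup norm. The MPC Bellman operator $B_{\mathrm{M}}:C_b(\mathcal{X}\times\Xi)\to C_b(\mathcal{X}\times\Xi)$ is $B_{\mathrm{M}}(f)(x,\xi)=\inf_{y\in\mathcal{Y}(x,\xi)}\{\varphi(x,y,\xi)+\beta f(y,\mu_N)\}$. $B_{\mathrm{M}}$ is called concavity preserving if there exists a closed subset $\mathcal{F}\subset C_b(\mathcal{X}\times\Xi)$ such that $\xi\mapsto f(x,\xi)$ is concave for every $x\in\mathcal{X}$ and $f\in\mathcal{F}$, and $B_{\mathrm{M}}(\mathcal{F})\subset\mathcal{F}$. *)

theory Defs
  imports "HOL-Analysis.Analysis" "HOL-Probability.Probability"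
begin

text \<open>C_b(X x Xi): bounded continuous real functions on the set D, represented
  by HOL functions (only their values on D matter).\<close>
definition Cb :: "('a::metric_space) set \<Rightarrow> ('a \<Rightarrow> real) set" where
  "Cb D = {f. continuous_on D f \<and> bounded (f ` D)}"

definition closed_Cb :: "('a::metric_space) set \<Rightarrow> ('a \<Rightarrow> real) set \<Rightarrow> bool" where
  "closed_Cb D F \<longleftrightarrow> F \<subseteq> Cb D \<and>
     (\<forall>fs f. (\<forall>k. fs k \<in> F) \<longrightarrow> f \<in> Cb D \<longrightarrow> uniform_limit D fs f sequentially \<longrightarrow> f \<in> F)"

definition uhc_on :: "('a::metric_space) set \<Rightarrow> ('a \<Rightarrow> ('b::topological_space) set) \<Rightarrow> bool" where
  "uhc_on D Y \<longleftrightarrow> (\<forall>p\<in>D. \<forall>U. open U \<longrightarrow> Y p \<subseteq> U \<longrightarrow>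
       (\<exists>e>0. \<forall>q\<in>D. dist q p < e \<longrightarrow> Y q \<subseteq> U))"

definition lhc_on :: "('a::metric_space) set \<Rightarrow> ('a \<Rightarrow> ('b::topological_space) set) \<Rightarrow> bool" where
  "lhc_on D Y \<longleftrightarrow> (\<forall>p\<in>D. \<forall>U. open U \<longrightarrow> Y p \<inter> U \<noteq> {} \<longrightarrow>
       (\<exists>e>0. \<forall>q\<in>D. dist q p < e \<longrightarrow> Y q \<inter> U \<noteq> {}))"

definition continuous_corr_on :: "('a::metric_space) set \<Rightarrow> ('a \<Rightarrow> ('b::topological_space) set) \<Rightarrow> bool" where
  "continuous_corr_on D Y \<longleftrightarrow> uhc_on D Y \<and> lhc_on D Y"

definition BM :: "('a \<Rightarrow> 'a \<Rightarrow> 'b \<Rightarrow> real) \<Rightarrow> ('a \<Rightarrow> 'b \<Rightarrow> 'a set) \<Rightarrow> real \<Rightarrow> 'b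
                   \<Rightarrow> ('a \<times> 'b \<Rightarrow> real) \<Rightarrow> ('a \<times> 'b \<Rightarrow> real)" where
  "BM \<phi> Y \<beta> \<mu> f = (\<lambda>(x, \<xi>). INF y\<in>Y x \<xi>. \<phi> x y \<xi> + \<beta> * f (y, \<mu>))"

text \<open>Concavity preservation: there is a (nonempty) closed subset F of C_b(X x Xi)
  of functions concave in the second argument, mapped into itself by BM
  (BM f is identified with any representative agreeing with it on X x Xi).\<close>
definition concavity_preserving ::
  "'a::euclidean_space set \<Rightarrow> 'b::euclidean_space set \<Rightarrow> ('a \<Rightarrow> 'a \<Rightarrow> 'b \<Rightarrow> real)
   \<Rightarrow> ('a \<Rightarrow> 'b \<Rightarrow> 'a set) \<Rightarrow> real \<Rightarrow> 'b \<Rightarrow> bool" where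
  "concavity_preserving X Xi \<phi> Y \<beta> \<mu> \<longleftrightarrow>
     (\<exists>F. F \<noteq> {} \<and> closed_Cb (X \<times> Xi) F \<and>
        (\<forall>f\<in>F. \<forall>x\<in>X. concave_on Xi (\<lambda>\<xi>. f (x, \<xi>))) \<and>
        (\<forall>f\<in>F. \<exists>g\<in>F. \<forall>p\<in>X \<times> Xi. g p = BM \<phi> Y \<beta> \<mu> f p))"

text \<open>Probability distributions on Xi: Borel probability measures on the ambient
  space giving full mass to Xi.\<close>
definition prob_on :: "'b::euclidean_space set \<Rightarrow> 'b measure \<Rightarrow> bool" where
  "prob_on Xi Q \<longleftrightarrow> prob_space Q \<and> sets Q = sets borel \<and> emeasure Q Xi = 1"

end

theory Submission
  imports Defs
begin

text \<open>Since \<open>B\<^sub>M\<close> is a \<open>\<beta>\<close>-contraction for the sup norm, its iterates started inside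
  the closed invariant set \<open>F\<close> converge uniformly to the unique bounded continuous fixed
  point \<open>v\<^sub>M\<close>, which therefore lies in \<open>F\<close> and is concave in \<open>\<xi>\<close>. By Jensen's inequality
  \<open>E\<^sub>Q v\<^sub>M(y, \<xi>) \<le> v\<^sub>M(y, \<mu>\<^sub>N)\<close> for every \<open>Q\<close> with mean \<open>\<mu>\<^sub>N\<close>, with equality for the point
  mass at \<open>\<mu>\<^sub>N\<close>; so the worst-case expectation in the DRO equation is \<open>v\<^sub>M(y, \<mu>\<^sub>N)\<close> and
  \<open>v\<^sub>M\<close> solves it.\<close>

lemma Cb_abs_bound:
  assumes "f \<in> Cb D"
  obtains K where "\<And>q. q \<in> D \<Longrightarrow> \<bar>f q\<bar> \<le> K"
  using assms by (force simp: Cb_def bounded_iff)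

lemma Cb_Pair_section:
  assumes "f \<in> Cb (A \<times> B)" "x \<in> A"
  shows "(\<lambda>y. f (x, y)) \<in> Cb B"
proof -
  have sub: "Pair x ` B \<subseteq> A \<times> B"
    using assms(2) by blast
  have "continuous_on B (\<lambda>y. f (x, y))"
    using assms(1) continuous_on_compose2[OF _ continuous_on_Pair[OF continuous_on_const continuous_on_id] sub]
    by (auto simp: Cb_def)
  moreover have "bounded ((\<lambda>y. f (x, y)) ` B)"
    using assms(1) sub by (auto simp: Cb_def image_image intro: bounded_subset)
  ultimately show ?thesis
    by (simp add: Cb_def)
qed

definition Cb_contraction :: "'a::metric_space set \<Rightarrow> real \<Rightarrow> (('a \<Rightarrow> real) \<Rightarrow> 'a \<Rightarrow> real) \<Rightarrow> bool"
  where "Cb_contraction D \<beta> T \<longleftrightarrow>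
    (\<forall>f\<in>Cb D. \<forall>g\<in>Cb D. \<forall>e. (\<forall>q\<in>D. \<bar>f q - g q\<bar> \<le> e) \<longrightarrow> (\<forall>p\<in>D. \<bar>T f p - T g p\<bar> \<le> \<beta> * e))"

lemma Cb_contractionD:
  "Cb_contraction D \<beta> T \<Longrightarrow> f \<in> Cb D \<Longrightarrow> g \<in> Cb D \<Longrightarrow> (\<And>q. q \<in> D \<Longrightarrow> \<bar>f q - g q\<bar> \<le> e)
    \<Longrightarrow> p \<in> D \<Longrightarrow> \<bar>T f p - T g p\<bar> \<le> \<beta> * e"
  unfolding Cb_contraction_def by blast

lemma Cb_contraction_fixpoints_eq:
  assumes T: "Cb_contraction D \<beta> T" "\<beta> < 1"
    and v: "v \<in> Cb D" "\<And>p. p \<in> D \<Longrightarrow> v p = T v p"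
    and w: "w \<in> Cb D" "\<And>p. p \<in> D \<Longrightarrow> w p = T w p"
    and p: "p \<in> D"
  shows "v p = w p"
proof -
  define s where "s = (SUP q\<in>D. \<bar>v q - w q\<bar>)"
  obtain Kv Kw where "\<And>q. q \<in> D \<Longrightarrow> \<bar>v q\<bar> \<le> Kv" "\<And>q. q \<in> D \<Longrightarrow> \<bar>w q\<bar> \<le> Kw"
    using Cb_abs_bound v(1) w(1) by metis
  then have bdd: "bdd_above ((\<lambda>q. \<bar>v q - w q\<bar>) ` D)"
    by (intro bdd_aboveI2[where M = "Kv + Kw"]) (smt (verit))
  have le_s: "\<bar>v q - w q\<bar> \<le> s" if "q \<in> D" for q
    unfolding s_def by (rule cSUP_upper[OF that bdd])
  have "\<bar>v q - w q\<bar> \<le> \<beta> * s" if "q \<in> D" for q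
    using Cb_contractionD[OF T(1) v(1) w(1) le_s that] v(2) w(2) that by simp
  then have "s \<le> \<beta> * s"
    using p by (auto simp: s_def intro!: cSUP_least)
  moreover have "0 \<le> s"
    using le_s[OF p] by linarith
  ultimately have "s \<le> 0"
    using T(2) by (smt (verit) mult_le_cancel_right1)
  then show ?thesis
    using le_s[OF p] by linarith
qed

lemma Cb_contraction_uniform_limit:
  assumes T: "Cb_contraction D \<beta> T" "0 \<le> \<beta>"
    and fs: "\<And>n. fs n \<in> Cb D" and v: "v \<in> Cb D" and lim: "uniform_limit D fs v sequentially"
  shows "uniform_limit D (\<lambda>n. T (fs n)) (T v) sequentially"
proof (rule uniform_limitI)
  fix e :: real
  assume "0 < e"
  then have "0 < e / (\<beta> + 1)" and "\<beta> * (e / (\<beta> + 1)) < e"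
    using T(2) by (simp_all add: field_simps)
  with uniform_limitD[OF lim] have "\<forall>\<^sub>F n in sequentially. \<forall>q\<in>D. \<bar>fs n q - v q\<bar> \<le> e / (\<beta> + 1)"
    by (fastforce simp: dist_real_def elim: eventually_mono)
  then show "\<forall>\<^sub>F n in sequentially. \<forall>p\<in>D. dist (T (fs n) p) (T v p) < e"
  proof eventually_elim
    case (elim n)
    show ?case
      using Cb_contractionD[OF T(1) fs v] elim \<open>\<beta> * (e / (\<beta> + 1)) < e\<close>
      by (smt (verit) dist_real_def)
  qed
qed

lemma Cb_contraction_iterate_steps:
  assumes T: "Cb_contraction D \<beta> T"
    and fs: "\<And>n. fs n \<in> Cb D" "\<And>n p. p \<in> D \<Longrightarrow> fs (Suc n) p = T (fs n) p"
    and M: "\<And>q. q \<in> D \<Longrightarrow> \<bar>fs 1 q - fs 0 q\<bar> \<le> M" and q: "q \<in> D"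
  shows "\<bar>fs (Suc n) q - fs n q\<bar> \<le> \<beta> ^ n * M"
  using q
proof (induction n arbitrary: q)
  case 0
  then show ?case
    using M by simp
next
  case (Suc n)
  then show ?case
    using Cb_contractionD[OF T fs(1) fs(1) Suc.IH Suc.prems] fs(2) by simp
qed

lemma uniformly_convergent_on_geometric_steps:
  fixes fs :: "nat \<Rightarrow> 'a \<Rightarrow> real"
  assumes "0 \<le> \<beta>" "\<beta> < 1" and step: "\<And>n q. q \<in> D \<Longrightarrow> \<bar>fs (Suc n) q - fs n q\<bar> \<le> \<beta> ^ n * M"
  shows "uniformly_convergent_on D fs"
proof -
  have "summable (\<lambda>n. \<beta> ^ n * M)"
    using assms(1,2) by (intro summable_mult2 summable_geometric) simp
  then have "uniform_limit D (\<lambda>n q. \<Sum>i<n. fs (Suc i) q - fs i q) (\<lambda>q. \<Sum>i. fs (Suc i) q - fs i q) sequentially"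
    using step by (intro Weierstrass_m_test) auto
  then have "uniform_limit D (\<lambda>n q. fs 0 q + (\<Sum>i<n. fs (Suc i) q - fs i q))
               (\<lambda>q. fs 0 q + (\<Sum>i. fs (Suc i) q - fs i q)) sequentially"
    by (intro uniform_limit_intros)
  moreover have "fs 0 q + (\<Sum>i<n. fs (Suc i) q - fs i q) = fs n q" for n q
    using sum_lessThan_telescope[of "\<lambda>i. fs i q"] by simp
  ultimately show ?thesis
    unfolding uniformly_convergent_on_def by auto
qed

lemma Cb_contraction_fixpoint:
  assumes T: "Cb_contraction D \<beta> T" "0 \<le> \<beta>" "\<beta> < 1"
    and F: "closed_Cb D F" "F \<noteq> {}" "\<forall>f\<in>F. \<exists>g\<in>F. \<forall>p\<in>D. g p = T f p"
  obtains v where "v \<in> F" "\<And>p. p \<in> D \<Longrightarrow> v p = T v p"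
proof -
  obtain S where S: "\<And>f. f \<in> F \<Longrightarrow> S f \<in> F" "\<And>f p. f \<in> F \<Longrightarrow> p \<in> D \<Longrightarrow> S f p = T f p"
    using F(3) by metis
  obtain f0 where "f0 \<in> F"
    using F(2) by blast
  define fs where "fs n = (S ^^ n) f0" for n
  have fs_F: "fs n \<in> F" for n
    by (induction n) (simp_all add: fs_def \<open>f0 \<in> F\<close> S(1))
  have fs_Cb: "fs n \<in> Cb D" for n
    using fs_F F(1) by (auto simp: closed_Cb_def)
  have fs_Suc: "fs (Suc n) p = T (fs n) p" if "p \<in> D" for n p
    using S(2)[OF fs_F that] by (simp add: fs_def)
  obtain K0 K1 where "\<And>q. q \<in> D \<Longrightarrow> \<bar>fs 0 q\<bar> \<le> K0" "\<And>q. q \<in> D \<Longrightarrow> \<bar>fs 1 q\<bar> \<le> K1"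
    using Cb_abs_bound fs_Cb by metis
  then have step0: "\<bar>fs 1 q - fs 0 q\<bar> \<le> K0 + K1" if "q \<in> D" for q
    using that by fastforce
  have "\<bar>fs (Suc n) q - fs n q\<bar> \<le> \<beta> ^ n * (K0 + K1)" if "q \<in> D" for n q
    using Cb_contraction_iterate_steps[OF T(1) fs_Cb fs_Suc step0 that] .
  then have "uniformly_convergent_on D fs"
    by (rule uniformly_convergent_on_geometric_steps[OF T(2,3)])
  then obtain v where lim: "uniform_limit D fs v sequentially"
    unfolding uniformly_convergent_on_def by blast
  have v_Cb: "v \<in> Cb D"
    using uniform_limit_theorem[OF _ lim] uniform_limit_bounded[OF lim] fs_Cb by (simp add: Cb_def)
  show thesis
  proof
    show "v \<in> F"
      using F(1) fs_F v_Cb lim by (auto simp: closed_Cb_def)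
  next
    fix p
    assume "p \<in> D"
    have "(\<lambda>n. T (fs n) p) \<longlonglongrightarrow> T v p"
      using Cb_contraction_uniform_limit[OF T(1,2) fs_Cb v_Cb lim] \<open>p \<in> D\<close> by (rule tendsto_uniform_limitI)
    moreover have "(\<lambda>n. T (fs n) p) \<longlonglongrightarrow> v p"
      using LIMSEQ_Suc[OF tendsto_uniform_limitI[OF lim \<open>p \<in> D\<close>]] fs_Suc[OF \<open>p \<in> D\<close>] by simp
    ultimately show "v p = T v p"
      using LIMSEQ_unique by blast
  qed
qed

lemma abs_INF_diff_le:
  fixes a b :: "'x \<Rightarrow> real"
  assumes "S \<noteq> {}" "bdd_below (a ` S)" "bdd_below (b ` S)" "\<And>y. y \<in> S \<Longrightarrow> \<bar>a y - b y\<bar> \<le> c"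
  shows "\<bar>(INF y\<in>S. a y) - (INF y\<in>S. b y)\<bar> \<le> c"
proof -
  have "(INF y\<in>S. a y) - c \<le> (INF y\<in>S. b y)"
    using assms cINF_lower[OF assms(2)] by (intro cINF_greatest) (smt (verit))+
  moreover have "(INF y\<in>S. b y) - c \<le> (INF y\<in>S. a y)"
    using assms cINF_lower[OF assms(3)] by (intro cINF_greatest) (smt (verit))+
  ultimately show ?thesis
    by linarith
qed

lemma BM_Cb_contraction:
  assumes \<phi>: "bounded ((\<lambda>(x, y, \<xi>). \<phi> x y \<xi>) ` (X \<times> X \<times> Xi))"
    and Y_sub: "\<And>x \<xi>. x \<in> X \<Longrightarrow> \<xi> \<in> Xi \<Longrightarrow> Y x \<xi> \<subseteq> X"
    and Y_ne: "\<And>x \<xi>. x \<in> X \<Longrightarrow> \<xi> \<in> Xi \<Longrightarrow> Y x \<xi> \<noteq> {}"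
    and \<mu>: "\<mu> \<in> Xi" and "0 \<le> \<beta>"
  shows "Cb_contraction (X \<times> Xi) \<beta> (BM \<phi> Y \<beta> \<mu>)"
  unfolding Cb_contraction_def
proof (intro ballI allI impI)
  fix f g e p
  assume f: "f \<in> Cb (X \<times> Xi)" and g: "g \<in> Cb (X \<times> Xi)"
    and fg: "\<forall>q\<in>X \<times> Xi. \<bar>f q - g q\<bar> \<le> e" and p: "p \<in> X \<times> Xi"
  obtain x \<xi> where x\<xi>: "p = (x, \<xi>)" "x \<in> X" "\<xi> \<in> Xi"
    using p by blast
  obtain K\<phi> where K\<phi>: "\<And>y. y \<in> X \<Longrightarrow> \<bar>\<phi> x y \<xi>\<bar> \<le> K\<phi>"
    using \<phi> x\<xi> by (force simp: bounded_iff)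
  have bdd: "bdd_below ((\<lambda>y. \<phi> x y \<xi> + \<beta> * h (y, \<mu>)) ` Y x \<xi>)" if h: "h \<in> Cb (X \<times> Xi)" for h
  proof -
    obtain K where K: "\<And>q. q \<in> X \<times> Xi \<Longrightarrow> \<bar>h q\<bar> \<le> K"
      using Cb_abs_bound[OF h] by blast
    have "- K\<phi> - \<beta> * K \<le> \<phi> x y \<xi> + \<beta> * h (y, \<mu>)" if "y \<in> X" for y
    proof -
      have "\<beta> * (- K) \<le> \<beta> * h (y, \<mu>)"
        using K[of "(y, \<mu>)"] that \<mu> \<open>0 \<le> \<beta>\<close> by (intro mult_left_mono) auto
      then show ?thesis
        using K\<phi>[OF that] by linarith
    qed
    then show ?thesis
      using Y_sub[OF x\<xi>(2,3)] by (intro bdd_belowI2) blast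
  qed
  have "\<bar>\<beta> * f (y, \<mu>) - \<beta> * g (y, \<mu>)\<bar> \<le> \<beta> * e" if "y \<in> Y x \<xi>" for y
    using fg Y_sub[OF x\<xi>(2,3)] that \<mu> \<open>0 \<le> \<beta>\<close>
    by (auto simp: abs_mult simp flip: right_diff_distrib intro: mult_left_mono)
  then show "\<bar>BM \<phi> Y \<beta> \<mu> f p - BM \<phi> Y \<beta> \<mu> g p\<bar> \<le> \<beta> * e"
    unfolding x\<xi>(1) BM_def using Y_ne[OF x\<xi>(2,3)] bdd[OF f] bdd[OF g]
    by (auto intro: abs_INF_diff_le)
qed

lemma concave_on_affine_majorant:
  fixes f :: "'a::euclidean_space \<Rightarrow> real"
  assumes S: "closed S" and f: "continuous_on S f" "concave_on S f"
    and x: "x \<in> S" and e: "0 < e"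
  obtains a c where "\<And>z. z \<in> S \<Longrightarrow> f z \<le> inner a z + c" and "inner a x + c < f x + e"
proof -
  let ?E = "epigraph S (\<lambda>z. - f z)"
  have E_eq: "?E = {p \<in> S \<times> UNIV. - f (fst p) \<le> snd p}"
    by (auto simp: epigraph_def)
  have "convex ?E"
    using f(2) by (simp add: convex_epigraph concave_on_def)
  moreover have "closed ?E"
    unfolding E_eq by (intro continuous_on_closed_Collect_le closed_Times S closed_UNIV continuous_on_snd
          continuous_on_minus continuous_on_compose2[OF f(1) continuous_on_fst]) auto
  moreover have "(x, - f x - e) \<notin> ?E"
    using e by (simp add: mem_epigraph)
  ultimately obtain ab c where sep: "inner ab (x, - f x - e) < c" and above: "\<forall>p\<in>?E. c < inner ab p"
    using separating_hyperplane_closed_point by blast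
  obtain a b where ab: "ab = (a, b)" by fastforce
  have graph: "c < inner a z - b * f z" if "z \<in> S" for z
  proof -
    have "(z, - f z) \<in> ?E"
      using that by (simp add: mem_epigraph)
    then show ?thesis
      using above by (force simp: ab)
  qed
  have sep': "inner a x - b * f x - b * e < c"
    using sep by (simp add: ab algebra_simps)
  have "0 < b"
    using sep' graph[OF x] e by (smt (verit) mult_nonpos_nonneg)
  show thesis
  proof
    show "f z \<le> inner (a /\<^sub>R b) z + (- c / b)" if "z \<in> S" for z
      using graph[OF that] \<open>0 < b\<close> by (simp add: field_simps)
    show "inner (a /\<^sub>R b) x + (- c / b) < f x + e"
      using sep' \<open>0 < b\<close> by (simp add: field_simps)
  qed
qed

lemma set_integral_concave_le:
  fixes f :: "'a::euclidean_space \<Rightarrow> real"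
  assumes S: "closed S" and f: "f \<in> Cb S" "concave_on S f"
    and Q: "prob_on S Q" "integrable Q (\<lambda>z. z)" "(\<integral>z. z \<partial>Q) = \<mu>"
    and \<mu>: "\<mu> \<in> S"
  shows "(LINT z:S|Q. f z) \<le> f \<mu>"
proof (rule field_le_epsilon)
  fix e :: real
  assume "0 < e"
  interpret prob_space Q
    using Q(1) by (simp add: prob_on_def)
  have sets_Q: "sets Q = sets borel" and "emeasure Q S = 1"
    using Q(1) by (simp_all add: prob_on_def)
  then have AE_S: "AE z in Q. z \<in> S"
    using S by (simp add: AE_prob_1 emeasure_eq_measure)
  obtain a c where maj: "\<And>z. z \<in> S \<Longrightarrow> f z \<le> inner a z + c" and at_\<mu>: "inner a \<mu> + c < f \<mu> + e"
    using concave_on_affine_majorant[OF S _ f(2) \<mu> \<open>0 < e\<close>] f(1) by (auto simp: Cb_def)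
  obtain K where K: "\<And>z. z \<in> S \<Longrightarrow> \<bar>f z\<bar> \<le> K"
    using Cb_abs_bound[OF f(1)] by blast
  have "(\<lambda>z. indicator S z *\<^sub>R f z) \<in> borel_measurable Q"
    using borel_measurable_continuous_on_indicator[of S f] S f(1)
    by (simp add: Cb_def measurable_cong_sets[OF sets_Q refl])
  then have int_f: "integrable Q (\<lambda>z. indicator S z *\<^sub>R f z)"
    by (intro integrable_const_bound[where B = "\<bar>K\<bar>"]) (use K in \<open>force simp: indicator_def\<close>)
  have int_aff: "integrable Q (\<lambda>z. inner a z + c)"
    using Q(2) by simp
  have "AE z in Q. indicator S z *\<^sub>R f z \<le> inner a z + c"
    using AE_S by eventually_elim (simp add: maj)
  then have "(LINT z:S|Q. f z) \<le> (\<integral>z. inner a z + c \<partial>Q)"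
    unfolding set_lebesgue_integral_def by (rule integral_mono_AE[OF int_f int_aff])
  also have "\<dots> = inner a \<mu> + c"
    using Q(2,3) by (simp add: integral_add integrable_inner_right prob_space)
  finally show "(LINT z:S|Q. f z) \<le> f \<mu> + e"
    using at_\<mu> by simp
qed

lemma SUP_set_integral_concave_eq:
  fixes f :: "'a::euclidean_space \<Rightarrow> real"
  assumes S: "closed S" and f: "f \<in> Cb S" "concave_on S f" and \<mu>: "\<mu> \<in> S"
    and P_prob: "\<And>Q. Q \<in> P \<Longrightarrow> prob_on S Q"
    and P_mean: "\<And>Q. Q \<in> P \<Longrightarrow> integrable Q (\<lambda>z. z) \<and> (\<integral>z. z \<partial>Q) = \<mu>"
    and P_dirac: "return borel \<mu> \<in> P"
  shows "(SUP Q\<in>P. LINT z:S|Q. f z) = f \<mu>"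
proof (rule cSup_eq_maximum)
  have "(\<lambda>z. indicator S z *\<^sub>R f z) \<in> borel_measurable borel"
    using borel_measurable_continuous_on_indicator[of S f] S f(1) by (simp add: Cb_def)
  then have "(LINT z:S|return borel \<mu>. f z) = f \<mu>"
    using \<mu> by (simp add: set_lebesgue_integral_def integral_return)
  then show "f \<mu> \<in> (\<lambda>Q. LINT z:S|Q. f z) ` P"
    using P_dirac by force
next
  fix r
  assume "r \<in> (\<lambda>Q. LINT z:S|Q. f z) ` P"
  then show "r \<le> f \<mu>"
    using set_integral_concave_le[OF S f _ _ _ \<mu>] P_prob P_mean by blast
qed

theorem theorem1:
  fixes X :: "'a::euclidean_space set" and Xi :: "'b::euclidean_space set"
    and \<beta> :: real and \<phi> :: "'a \<Rightarrow> 'a \<Rightarrow> 'b \<Rightarrow> real" and Y :: "'a \<Rightarrow> 'b \<Rightarrow> 'a set"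
    and N :: nat and xs :: "nat \<Rightarrow> 'b" and \<mu> :: 'b and P :: "'b measure set"
  assumes X: "closed X" "convex X"
    and Xi: "closed Xi" "convex Xi"
    and beta: "0 < \<beta>" "\<beta> < 1"
    and phi_cont: "continuous_on (X \<times> X \<times> Xi) (\<lambda>(x, y, \<xi>). \<phi> x y \<xi>)"
    and phi_bdd: "bounded ((\<lambda>(x, y, \<xi>). \<phi> x y \<xi>) ` (X \<times> X \<times> Xi))"
    and Y_sub: "\<And>x \<xi>. x \<in> X \<Longrightarrow> \<xi> \<in> Xi \<Longrightarrow> Y x \<xi> \<subseteq> X"
    and Y_ne: "\<And>x \<xi>. x \<in> X \<Longrightarrow> \<xi> \<in> Xi \<Longrightarrow> Y x \<xi> \<noteq> {}"
    and Y_compact: "\<And>x \<xi>. x \<in> X \<Longrightarrow> \<xi> \<in> Xi \<Longrightarrow> compact (Y x \<xi>)"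
    and Y_cont: "continuous_corr_on (X \<times> Xi) (\<lambda>(x, \<xi>). Y x \<xi>)"
    and N: "N \<ge> 1"
    and xs: "\<And>i. i \<in> {1..N} \<Longrightarrow> xs i \<in> Xi"
    and mu: "\<mu> = (1 / real N) *\<^sub>R (\<Sum>i=1..N. xs i)"
    and P_prob: "\<And>Q. Q \<in> P \<Longrightarrow> prob_on Xi Q"
    and P_mean: "\<And>Q. Q \<in> P \<Longrightarrow> integrable Q (\<lambda>\<xi>. \<xi>) \<and> (\<integral>\<xi>. \<xi> \<partial>Q) = \<mu>"
    and P_dirac: "return borel \<mu> \<in> P"
    and cp: "concavity_preserving X Xi \<phi> Y \<beta> \<mu>"
  shows "\<exists>v \<in> Cb (X \<times> Xi).
           (\<forall>x\<in>X. \<forall>\<xi>\<in>Xi. v (x, \<xi>) =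
              (INF y\<in>Y x \<xi>. \<phi> x y \<xi> + \<beta> * (SUP Q\<in>P. (LINT \<zeta>:Xi|Q. v (y, \<zeta>))))) \<and>
           (\<forall>x\<in>X. \<forall>\<xi>\<in>Xi. v (x, \<xi>) = (INF y\<in>Y x \<xi>. \<phi> x y \<xi> + \<beta> * v (y, \<mu>))) \<and>
           (\<forall>w \<in> Cb (X \<times> Xi).
              (\<forall>x\<in>X. \<forall>\<xi>\<in>Xi. w (x, \<xi>) = (INF y\<in>Y x \<xi>. \<phi> x y \<xi> + \<beta> * w (y, \<mu>)))
              \<longrightarrow> (\<forall>p\<in>X \<times> Xi. w p = v p))"
proof -
  have \<mu>_in: "\<mu> \<in> Xi"
    unfolding mu scaleR_sum_right using N xs by (intro convex_sum[OF _ Xi(2)]) auto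
  obtain F where F: "F \<noteq> {}" "closed_Cb (X \<times> Xi) F" "\<forall>f\<in>F. \<forall>x\<in>X. concave_on Xi (\<lambda>\<xi>. f (x, \<xi>))"
    "\<forall>f\<in>F. \<exists>g\<in>F. \<forall>p\<in>X \<times> Xi. g p = BM \<phi> Y \<beta> \<mu> f p"
    using cp unfolding concavity_preserving_def by blast
  have contr: "Cb_contraction (X \<times> Xi) \<beta> (BM \<phi> Y \<beta> \<mu>)"
    using BM_Cb_contraction[OF phi_bdd Y_sub Y_ne \<mu>_in] beta by simp
  obtain v where "v \<in> F" and v_fix: "\<And>p. p \<in> X \<times> Xi \<Longrightarrow> v p = BM \<phi> Y \<beta> \<mu> v p"
    using Cb_contraction_fixpoint[OF contr _ beta(2) F(2,1,4)] beta(1) by auto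
  then have v_Cb: "v \<in> Cb (X \<times> Xi)"
    using F(2) by (auto simp: closed_Cb_def)
  have MPC: "\<forall>x\<in>X. \<forall>\<xi>\<in>Xi. v (x, \<xi>) = (INF y\<in>Y x \<xi>. \<phi> x y \<xi> + \<beta> * v (y, \<mu>))"
    using v_fix by (simp add: BM_def)
  have "(SUP Q\<in>P. LINT \<zeta>:Xi|Q. v (y, \<zeta>)) = v (y, \<mu>)" if "y \<in> X" for y
    using SUP_set_integral_concave_eq[OF Xi(1) Cb_Pair_section[OF v_Cb that]] F(3) \<open>v \<in> F\<close> that
      \<mu>_in P_prob P_mean P_dirac by blast
  then have DRO: "\<forall>x\<in>X. \<forall>\<xi>\<in>Xi. v (x, \<xi>) =
      (INF y\<in>Y x \<xi>. \<phi> x y \<xi> + \<beta> * (SUP Q\<in>P. LINT \<zeta>:Xi|Q. v (y, \<zeta>)))"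
    using MPC Y_sub by (force intro!: INF_cong)
  have "\<forall>p\<in>X \<times> Xi. w p = v p"
    if "w \<in> Cb (X \<times> Xi)" "\<forall>x\<in>X. \<forall>\<xi>\<in>Xi. w (x, \<xi>) = (INF y\<in>Y x \<xi>. \<phi> x y \<xi> + \<beta> * w (y, \<mu>))" for w
    using Cb_contraction_fixpoints_eq[OF contr beta(2) that(1) _ v_Cb v_fix] that(2) by (auto simp: BM_def)
  with v_Cb MPC DRO show ?thesis
    by blast
qed

end
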